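(* Let $(\Omega,\Sigma,\mu)$ be an admissible measure space. (a) The map $E\mapsto E_0$, regarded as a map $\mathcal{J}_0(\mu)\to\mathcal{J}_0(\mu)$, is a closure operator on $\langle\mathcal{J}_0(\mu),\vartriangleleft\rangle$, where $E\vartriangleleft F$ means $F\subset^1E$; that is, for all $E,F\in\mathcal{J}_0(\mu)$: $E_0\in\mathcal{J}_0(\mu)$; $F\subset^1E$ implies $F_0\subset^1E_0$; $E_0\subset^1E$; and $(E_0)_0=E_0$. (b) The map $E\mapsto E''$, regarded as a map $\mathcal{J}_0(\mu)\to\mathcal{J}_0(\mu)$, is a closure operator with respect to $\subset^1$; that is, for all $E,F\in\mathcal{J}_0(\mu)$: $E''\in\mathcal{J}_0(\mu)$; $E\subset^1F$ implies $E''\subset^1F''$; $E\subset^1E''$; and $(E'')''=E''$.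
   Context: $L_0(\mu)$: classes of measurable real functions ordered a.e. Admissible measure space: $\mu$ complete; a set whose intersection with every finite-measure measurable set is measurable is itself measurable; $\mu$ semifinite; $\mu$ has the direct sum property. A Banach ideal space (BIS) is a vector subspace $E\subset L_0(\mu)$ with complete norm such that $y\in E$, $|x|\le|y|$ a.e. imply $x\in E$, $\|x\|_E\le\|y\|_E$; maximal width: the only $z\in L_0(\mu)$ with $zy=0$ for all $y\in E$ is $z=0$. $E\subset^1F$: $E\subseteq F$ and $\|x\|_F\le\|x\|_E$ for $x\in E$; equality means equal sets with equal norms. Dual $E'$: all $f\in L_0(\mu)$ with $\|f\|_{E'}=\sup\{\int_\Omega fx\,d\mu:\|x\|_E=1\}<\infty$. $E_0$: the elements $x\in E$ with order continuous norm (for every decreasing net $|x|\ge x_i\downarrow0$, $\|x_i\|_E\to0$), with the norm of $E$. A foundation in $E$ is an ideal of $E$ of maximal width. $\mathcal{J}_0(\mu)$: BIS $E$ of maximal width such that $E_0$ is a foundation in $E$ and $(E')_0$ is a foundation in $E'$. A closure operator $\pi$ on a poset $\langle L,<\rangle$ satisfies: $a<b\Rightarrow\pi(a)<\pi(b)$, $a<\pi(a)$, $\pi(\pi(a))=\pi(a)$. *)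

theory Defs
  imports "HOL-Analysis.Analysis"
begin

definition semifinite :: "'a measure \<Rightarrow> bool" where
  "semifinite M \<longleftrightarrow> (\<forall>A\<in>sets M. emeasure M A = \<infinity> \<longrightarrow>
      (\<exists>B\<in>sets M. B \<subseteq> A \<and> 0 < emeasure M B \<and> emeasure M B < \<infinity>))"

definition locally_determined :: "'a measure \<Rightarrow> bool" where
  "locally_determined M \<longleftrightarrow> (\<forall>A. A \<subseteq> space M \<longrightarrow>
      (\<forall>B\<in>sets M. emeasure M B < \<infinity> \<longrightarrow> A \<inter> B \<in> sets M) \<longrightarrow> A \<in> sets M)"

definition direct_sum_property :: "'a measure \<Rightarrow> bool" where
  "direct_sum_property M \<longleftrightarrow> (\<exists>P. P \<subseteq> sets M \<and> disjoint P \<and> \<Union>P = space M \<and>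
      (\<forall>B\<in>P. emeasure M B < \<infinity>) \<and>
      (\<forall>A\<in>sets M. emeasure M A =
          (SUP Q\<in>{Q. finite Q \<and> Q \<subseteq> P}. \<Sum>B\<in>Q. emeasure M (A \<inter> B))))"

definition admissible :: "'a measure \<Rightarrow> bool" where
  "admissible M \<longleftrightarrow> complete_measure M \<and> locally_determined M \<and> semifinite M
      \<and> direct_sum_property M"

text \<open>Elements of L_0 are represented by measurable real functions; a space is a pair
  (set of representatives, norm on representatives).  Only the values of the norm on
  the set matter.\<close>
type_synonym 'a bis = "('a \<Rightarrow> real) set \<times> (('a \<Rightarrow> real) \<Rightarrow> real)"

definition is_bis :: "'a measure \<Rightarrow> 'a bis \<Rightarrow> bool" where
  "is_bis M E \<longleftrightarrow> (let S = fst E; n = snd E in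
     S \<subseteq> borel_measurable M \<and>
     (\<lambda>_. 0) \<in> S \<and>
     (\<forall>x\<in>S. \<forall>y\<in>S. (\<lambda>w. x w + y w) \<in> S) \<and>
     (\<forall>x\<in>S. \<forall>c::real. (\<lambda>w. c * x w) \<in> S) \<and>
     (\<forall>x\<in>S. 0 \<le> n x) \<and>
     (\<forall>x\<in>S. n x = 0 \<longrightarrow> (AE w in M. x w = 0)) \<and>
     (\<forall>x\<in>S. \<forall>y\<in>S. n (\<lambda>w. x w + y w) \<le> n x + n y) \<and>
     (\<forall>x\<in>S. \<forall>c::real. n (\<lambda>w. c * x w) = \<bar>c\<bar> * n x) \<and>
     (\<forall>X::nat \<Rightarrow> 'a \<Rightarrow> real. (\<forall>k. X k \<in> S) \<longrightarrow>
        (\<forall>e>0. \<exists>N. \<forall>i\<ge>N. \<forall>j\<ge>N. n (\<lambda>w. X i w - X j w) < e) \<longrightarrow>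
        (\<exists>x\<in>S. (\<lambda>k. n (\<lambda>w. X k w - x w)) \<longlonglongrightarrow> 0)) \<and>
     (\<forall>y\<in>S. \<forall>x\<in>borel_measurable M. (AE w in M. \<bar>x w\<bar> \<le> \<bar>y w\<bar>) \<longrightarrow> x \<in> S \<and> n x \<le> n y))"

definition max_width :: "'a measure \<Rightarrow> ('a \<Rightarrow> real) set \<Rightarrow> bool" where
  "max_width M S \<longleftrightarrow> (\<forall>z\<in>borel_measurable M.
      (\<forall>y\<in>S. AE w in M. z w * y w = 0) \<longrightarrow> (AE w in M. z w = 0))"

definition sub1 :: "'a bis \<Rightarrow> 'a bis \<Rightarrow> bool" where
  "sub1 E F \<longleftrightarrow> fst E \<subseteq> fst F \<and> (\<forall>x\<in>fst E. snd F x \<le> snd E x)"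

definition bis_eq :: "'a bis \<Rightarrow> 'a bis \<Rightarrow> bool" where
  "bis_eq E F \<longleftrightarrow> fst E = fst F \<and> (\<forall>x\<in>fst E. snd E x = snd F x)"

definition kdual :: "'a measure \<Rightarrow> 'a bis \<Rightarrow> 'a bis" where
  "kdual M E = (
     {f \<in> borel_measurable M. (\<forall>x\<in>fst E. integrable M (\<lambda>w. f w * x w)) \<and>
        bdd_above {(\<integral>w. f w * x w \<partial>M) | x. x \<in> fst E \<and> snd E x = 1}},
     (\<lambda>f. Sup (insert 0 {(\<integral>w. f w * x w \<partial>M) | x. x \<in> fst E \<and> snd E x = 1})))"

text \<open>Order continuity of the norm at x: for every decreasing net (represented by
  its downward directed set of values) with |x| \<ge> x_i and inf x_i = 0 in L_0,
  the norms tend to 0.\<close>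
definition oc_elem :: "'a measure \<Rightarrow> 'a bis \<Rightarrow> ('a \<Rightarrow> real) \<Rightarrow> bool" where
  "oc_elem M E x \<longleftrightarrow> (\<forall>D. D \<subseteq> borel_measurable M \<and> D \<noteq> {} \<and>
      (\<forall>a\<in>D. \<forall>b\<in>D. \<exists>c\<in>D. (AE w in M. c w \<le> a w) \<and> (AE w in M. c w \<le> b w)) \<and>
      (\<forall>d\<in>D. AE w in M. 0 \<le> d w \<and> d w \<le> \<bar>x w\<bar>) \<and>
      (\<forall>z\<in>borel_measurable M. (\<forall>d\<in>D. AE w in M. z w \<le> d w) \<longrightarrow> (AE w in M. z w \<le> 0))
      \<longrightarrow> (\<forall>e>0. \<exists>d\<in>D. snd E d < e))"

definition oc_part :: "'a measure \<Rightarrow> 'a bis \<Rightarrow> 'a bis" where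
  "oc_part M E = ({x \<in> fst E. oc_elem M E x}, snd E)"

definition foundation :: "'a measure \<Rightarrow> ('a \<Rightarrow> real) set \<Rightarrow> ('a \<Rightarrow> real) set \<Rightarrow> bool" where
  "foundation M S T \<longleftrightarrow> S \<subseteq> T \<and> (\<lambda>_. 0) \<in> S \<and>
     (\<forall>x\<in>S. \<forall>y\<in>S. (\<lambda>w. x w + y w) \<in> S) \<and>
     (\<forall>x\<in>S. \<forall>c::real. (\<lambda>w. c * x w) \<in> S) \<and>
     (\<forall>y\<in>S. \<forall>x\<in>T. (AE w in M. \<bar>x w\<bar> \<le> \<bar>y w\<bar>) \<longrightarrow> x \<in> S) \<and>
     max_width M S"

definition J0 :: "'a measure \<Rightarrow> 'a bis \<Rightarrow> bool" where
  "J0 M E \<longleftrightarrow> is_bis M E \<and> max_width M (fst E) \<and>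
     foundation M (fst (oc_part M E)) (fst E) \<and>
     foundation M (fst (oc_part M (kdual M E))) (fst (kdual M E))"

end

theory Submission
  imports Defs
begin

(* (a) Order continuity of the norm at x survives sums, scalar multiples, domination and norm
   limits, so E_0 is always a closed ideal of E, hence a Banach ideal space with the norm of E.
   Idempotence holds because order continuity only depends on the norm, and F \<subset>^1 E gives
   F_0 \<subset>^1 E_0 because a net below |x| lies in F when x does.  For E_0 \<in> J_0 the key fact is
   (E_0)' = E' whenever E_0 is a foundation of E: for x \<in> E the elements of the foundation
   between 0 and |x| form an upward directed family, an increasing sequence in it maximizing the
   pairing with |f| exhausts |x| on the support of f (by maximal width), so f \<in> (E_0)' pairs
   with x as boundedly as with the elements of E_0.
   (b) The Hoelder inequality gives E \<subset>^1 E'', and duality reverses \<subset>^1, hence E''' = E'.  The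
   dual of a space of maximal width is again a Banach ideal space; completeness is the
   Riesz-Fischer argument: an absolutely summable series in E' converges a.e., since the sum of
   the absolute values is integrable against every x \<in> E.  Maximal width and the foundations
   required by J_0 pass to E'' through E \<subseteq> E'' and E''' = E'. *)

section \<open>Banach ideal spaces\<close>

lemma is_bis_iff: "is_bis M E \<longleftrightarrow>
     fst E \<subseteq> borel_measurable M \<and>
     (\<lambda>_. 0) \<in> fst E \<and>
     (\<forall>x\<in>fst E. \<forall>y\<in>fst E. (\<lambda>w. x w + y w) \<in> fst E) \<and>
     (\<forall>x\<in>fst E. \<forall>c::real. (\<lambda>w. c * x w) \<in> fst E) \<and>
     (\<forall>x\<in>fst E. 0 \<le> snd E x) \<and>
     (\<forall>x\<in>fst E. snd E x = 0 \<longrightarrow> (AE w in M. x w = 0)) \<and>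
     (\<forall>x\<in>fst E. \<forall>y\<in>fst E. snd E (\<lambda>w. x w + y w) \<le> snd E x + snd E y) \<and>
     (\<forall>x\<in>fst E. \<forall>c::real. snd E (\<lambda>w. c * x w) = \<bar>c\<bar> * snd E x) \<and>
     (\<forall>X::nat \<Rightarrow> 'a \<Rightarrow> real. (\<forall>k. X k \<in> fst E) \<longrightarrow>
        (\<forall>e>0. \<exists>N. \<forall>i\<ge>N. \<forall>j\<ge>N. snd E (\<lambda>w. X i w - X j w) < e) \<longrightarrow>
        (\<exists>x\<in>fst E. (\<lambda>k. snd E (\<lambda>w. X k w - x w)) \<longlonglongrightarrow> 0)) \<and>
     (\<forall>y\<in>fst E. \<forall>x\<in>borel_measurable M. (AE w in M. \<bar>x w\<bar> \<le> \<bar>y w\<bar>) \<longrightarrow> x \<in> fst E \<and> snd E x \<le> snd E y)"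
  unfolding is_bis_def Let_def by simp

lemma is_bisI:
  assumes "fst E \<subseteq> borel_measurable M"
    and "(\<lambda>_. 0) \<in> fst E"
    and "\<And>x y. x \<in> fst E \<Longrightarrow> y \<in> fst E \<Longrightarrow> (\<lambda>w. x w + y w) \<in> fst E"
    and "\<And>x c. x \<in> fst E \<Longrightarrow> (\<lambda>w. c * x w) \<in> fst E"
    and "\<And>x. x \<in> fst E \<Longrightarrow> 0 \<le> snd E x"
    and "\<And>x. x \<in> fst E \<Longrightarrow> snd E x = 0 \<Longrightarrow> AE w in M. x w = 0"
    and "\<And>x y. x \<in> fst E \<Longrightarrow> y \<in> fst E \<Longrightarrow> snd E (\<lambda>w. x w + y w) \<le> snd E x + snd E y"
    and "\<And>x c. x \<in> fst E \<Longrightarrow> snd E (\<lambda>w. c * x w) = \<bar>c\<bar> * snd E x"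
    and "\<And>X. (\<And>k. X k \<in> fst E) \<Longrightarrow>
        \<forall>e>0. \<exists>N. \<forall>i\<ge>N. \<forall>j\<ge>N. snd E (\<lambda>w. X i w - X j w) < e \<Longrightarrow>
        \<exists>x\<in>fst E. (\<lambda>k. snd E (\<lambda>w. X k w - x w)) \<longlonglongrightarrow> 0"
    and "\<And>x y. y \<in> fst E \<Longrightarrow> x \<in> borel_measurable M \<Longrightarrow> AE w in M. \<bar>x w\<bar> \<le> \<bar>y w\<bar> \<Longrightarrow>
        x \<in> fst E \<and> snd E x \<le> snd E y"
  shows "is_bis M E"
  unfolding is_bis_iff
proof (intro conjI ballI allI impI)
  show "fst E \<subseteq> borel_measurable M" "(\<lambda>_. 0) \<in> fst E" by (fact assms)+
next
  fix X :: "nat \<Rightarrow> 'a \<Rightarrow> real"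
  assume "\<forall>k. X k \<in> fst E" "\<forall>e>0. \<exists>N. \<forall>i\<ge>N. \<forall>j\<ge>N. snd E (\<lambda>w. X i w - X j w) < e"
  then show "\<exists>x\<in>fst E. (\<lambda>k. snd E (\<lambda>w. X k w - x w)) \<longlonglongrightarrow> 0" using assms(9) by blast
qed (simp_all add: assms(3-8,10))

context
  fixes M :: "'a measure" and E :: "'a bis"
  assumes bis: "is_bis M E"
begin

lemma bis_measurable: "x \<in> fst E \<Longrightarrow> x \<in> borel_measurable M"
  using bis unfolding is_bis_iff by blast

lemma bis_zero: "(\<lambda>_. 0) \<in> fst E"
  using bis unfolding is_bis_iff by blast

lemma bis_add: "x \<in> fst E \<Longrightarrow> y \<in> fst E \<Longrightarrow> (\<lambda>w. x w + y w) \<in> fst E"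
  using bis unfolding is_bis_iff by blast

lemma bis_scale: "x \<in> fst E \<Longrightarrow> (\<lambda>w. c * x w) \<in> fst E"
  using bis unfolding is_bis_iff by blast

lemma bis_norm_nonneg: "x \<in> fst E \<Longrightarrow> 0 \<le> snd E x"
  using bis unfolding is_bis_iff by blast

lemma bis_norm_eq_0D: "x \<in> fst E \<Longrightarrow> snd E x = 0 \<Longrightarrow> AE w in M. x w = 0"
  using bis unfolding is_bis_iff by blast

lemma bis_norm_triangle:
  "x \<in> fst E \<Longrightarrow> y \<in> fst E \<Longrightarrow> snd E (\<lambda>w. x w + y w) \<le> snd E x + snd E y"
  using bis unfolding is_bis_iff by blast

lemma bis_norm_scale: "x \<in> fst E \<Longrightarrow> snd E (\<lambda>w. c * x w) = \<bar>c\<bar> * snd E x"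
  using bis unfolding is_bis_iff by blast

lemma bis_complete:
  assumes "\<And>k. X k \<in> fst E" and "\<forall>e>0. \<exists>N. \<forall>i\<ge>N. \<forall>j\<ge>N. snd E (\<lambda>w. X i w - X j w) < e"
  shows "\<exists>x\<in>fst E. (\<lambda>k. snd E (\<lambda>w. X k w - x w)) \<longlonglongrightarrow> 0"
  using bis assms unfolding is_bis_iff by blast

lemma bis_solid:
  "y \<in> fst E \<Longrightarrow> x \<in> borel_measurable M \<Longrightarrow> AE w in M. \<bar>x w\<bar> \<le> \<bar>y w\<bar> \<Longrightarrow>
    x \<in> fst E \<and> snd E x \<le> snd E y"
  using bis unfolding is_bis_iff by blast

lemma bis_diff: "x \<in> fst E \<Longrightarrow> y \<in> fst E \<Longrightarrow> (\<lambda>w. x w - y w) \<in> fst E"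
  using bis_add[of x "\<lambda>w. (-1) * y w"] bis_scale[of y "-1"] by simp

end

lemma sub1_antisym: "sub1 E F \<Longrightarrow> sub1 F E \<Longrightarrow> bis_eq E F"
  unfolding sub1_def bis_eq_def by (auto intro: antisym)

lemma bis_eq_sym: "bis_eq E F \<Longrightarrow> bis_eq F E"
  unfolding bis_eq_def by auto

lemma bis_eq_imp_sub1: "bis_eq E F \<Longrightarrow> sub1 E F \<and> sub1 F E"
  unfolding bis_eq_def sub1_def by auto

lemma max_width_mono: "S \<subseteq> T \<Longrightarrow> max_width M S \<Longrightarrow> max_width M T"
  unfolding max_width_def by blast

lemma foundationD:
  assumes "foundation M G S"
  shows "G \<subseteq> S" and "(\<lambda>_. 0) \<in> G" and "\<And>x y. x \<in> G \<Longrightarrow> y \<in> G \<Longrightarrow> (\<lambda>w. x w + y w) \<in> G"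
    and "\<And>x c. x \<in> G \<Longrightarrow> (\<lambda>w. c * x w) \<in> G" and "max_width M G"
  using assms unfolding foundation_def by blast+

lemma foundation_solid:
  assumes bis: "is_bis M E" and fd: "foundation M G (fst E)" and y: "y \<in> G"
    and x: "x \<in> borel_measurable M" and le: "AE w in M. \<bar>x w\<bar> \<le> \<bar>y w\<bar>"
  shows "x \<in> G"
proof -
  have "y \<in> fst E" using foundationD(1)[OF fd] y by blast
  then have "x \<in> fst E" using bis_solid[OF bis _ x le] by blast
  then show ?thesis using fd y le unfolding foundation_def by blast
qed

lemma foundation_max:
  assumes bis: "is_bis M E" and fd: "foundation M G (fst E)" and a: "a \<in> G" and b: "b \<in> G"
    and nonneg: "\<forall>w\<in>space M. 0 \<le> a w \<and> 0 \<le> b w"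
  shows "(\<lambda>w. max (a w) (b w)) \<in> G"
proof (rule foundation_solid[OF bis fd foundationD(3)[OF fd a b]])
  have "a \<in> borel_measurable M" "b \<in> borel_measurable M"
    using a b foundationD(1)[OF fd] bis_measurable[OF bis] by auto
  then show "(\<lambda>w. max (a w) (b w)) \<in> borel_measurable M" by measurable
  show "AE w in M. \<bar>max (a w) (b w)\<bar> \<le> \<bar>a w + b w\<bar>" using nonneg by (intro AE_I2) auto
qed

section \<open>Koethe duals\<close>

lemma mem_kdual_iff:
  "f \<in> fst (kdual M E) \<longleftrightarrow> f \<in> borel_measurable M \<and>
     (\<forall>x\<in>fst E. integrable M (\<lambda>w. f w * x w)) \<and>
     bdd_above {(\<integral>w. f w * x w \<partial>M) | x. x \<in> fst E \<and> snd E x = 1}"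
  by (simp add: kdual_def)

lemma kdual_norm_eq:
  "snd (kdual M E) f = Sup (insert 0 {(\<integral>w. f w * x w \<partial>M) | x. x \<in> fst E \<and> snd E x = 1})"
  by (simp add: kdual_def)

lemma kdual_measurable: "f \<in> fst (kdual M E) \<Longrightarrow> f \<in> borel_measurable M"
  by (simp add: mem_kdual_iff)

lemma kdual_subset_measurable: "fst (kdual M E) \<subseteq> borel_measurable M"
  by (auto simp: mem_kdual_iff)

lemma kdual_norm_nonneg: "f \<in> fst (kdual M E) \<Longrightarrow> 0 \<le> snd (kdual M E) f"
  unfolding kdual_norm_eq by (rule cSup_upper) (auto simp: mem_kdual_iff)

lemma kdual_cong:
  assumes "bis_eq E F"
  shows "kdual M E = kdual M F"
proof -
  have "{(\<integral>w. f w * x w \<partial>M) | x. x \<in> fst E \<and> snd E x = 1} =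
      {(\<integral>w. f w * x w \<partial>M) | x. x \<in> fst F \<and> snd F x = 1}" for f
    using assms by (auto simp: bis_eq_def)
  then show ?thesis using assms by (simp add: kdual_def bis_eq_def)
qed

lemma kdual_memI:
  assumes "fst E \<subseteq> borel_measurable M" and g: "g \<in> borel_measurable M" and C: "0 \<le> C"
    and bound: "\<And>x. x \<in> fst E \<Longrightarrow> (\<integral>\<^sup>+w. ennreal \<bar>g w * x w\<bar> \<partial>M) \<le> ennreal (C * snd E x)"
  shows "g \<in> fst (kdual M E) \<and> snd (kdual M E) g \<le> C"
proof -
  have int: "integrable M (\<lambda>w. g w * x w)" if x: "x \<in> fst E" for x
  proof (rule integrableI_bounded)
    show "(\<lambda>w. g w * x w) \<in> borel_measurable M" using assms(1) g x by auto
    show "(\<integral>\<^sup>+w. ennreal (norm (g w * x w)) \<partial>M) < \<infinity>"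
      using bound[OF x] by (simp add: le_less_trans)
  qed
  have le: "(\<integral>w. g w * x w \<partial>M) \<le> C" if x: "x \<in> fst E" and "snd E x = 1" for x
  proof -
    have "ennreal (norm (\<integral>w. g w * x w \<partial>M)) \<le> (\<integral>\<^sup>+w. ennreal (norm (g w * x w)) \<partial>M)"
      by (rule integral_norm_bound_ennreal[OF int[OF x]])
    also have "\<dots> \<le> ennreal C" using bound[OF x] \<open>snd E x = 1\<close> by simp
    finally show ?thesis using C by (simp add: ennreal_le_iff)
  qed
  then have "bdd_above {(\<integral>w. g w * x w \<partial>M) | x. x \<in> fst E \<and> snd E x = 1}"
    by (auto intro!: bdd_aboveI[of _ C])
  moreover have "snd (kdual M E) g \<le> C"
    unfolding kdual_norm_eq using le C by (intro cSup_least) auto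
  ultimately show ?thesis using g int by (simp add: mem_kdual_iff)
qed

context
  fixes M :: "'a measure" and E :: "'a bis"
  assumes bis: "is_bis M E"
begin

lemma integral_le_kdual_norm:
  assumes f: "f \<in> fst (kdual M E)" and x: "x \<in> fst E"
  shows "(\<integral>w. f w * x w \<partial>M) \<le> snd (kdual M E) f * snd E x"
proof (cases "snd E x = 0")
  case True
  then have "AE w in M. f w * x w = 0" using bis_norm_eq_0D[OF bis x] by auto
  then have "(\<integral>w. f w * x w \<partial>M) = 0" by (simp add: integral_eq_zero_AE)
  then show ?thesis using True by simp
next
  case False
  then have pos: "snd E x > 0" using bis_norm_nonneg[OF bis x] by simp
  define c where "c = 1 / snd E x"
  have "(\<integral>w. f w * (c * x w) \<partial>M) \<le> snd (kdual M E) f"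
    unfolding kdual_norm_eq using f bis_scale[OF bis x, of c] bis_norm_scale[OF bis x, of c] pos
    by (intro cSup_upper) (auto simp: mem_kdual_iff c_def)
  moreover have "(\<integral>w. f w * (c * x w) \<partial>M) = c * (\<integral>w. f w * x w \<partial>M)"
    by (simp add: mult.left_commute)
  ultimately show ?thesis using pos by (simp add: c_def field_simps)
qed

lemma nn_integral_abs_le_kdual_norm:
  assumes f: "f \<in> fst (kdual M E)" and x: "x \<in> fst E"
  shows "(\<integral>\<^sup>+w. ennreal \<bar>f w * x w\<bar> \<partial>M) \<le> ennreal (snd (kdual M E) f * snd E x)"
proof -
  define v where "v w = sgn (f w) * \<bar>x w\<bar>" for w
  have "v \<in> borel_measurable M"
    unfolding v_def using kdual_measurable[OF f] bis_measurable[OF bis x] by measurable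
  moreover have "AE w in M. \<bar>v w\<bar> \<le> \<bar>x w\<bar>" by (auto simp: v_def abs_mult abs_sgn_eq)
  ultimately have v: "v \<in> fst E" and "snd E v \<le> snd E x" using bis_solid[OF bis x] by auto
  have fv: "f w * v w = \<bar>f w * x w\<bar>" for w
  proof -
    have "f w * sgn (f w) = \<bar>f w\<bar>" by (simp add: abs_if sgn_if)
    then show ?thesis by (simp add: v_def abs_mult mult.assoc[symmetric])
  qed
  have "integrable M (\<lambda>w. f w * v w)" using f v by (simp add: mem_kdual_iff)
  then have "(\<integral>\<^sup>+w. ennreal \<bar>f w * x w\<bar> \<partial>M) = ennreal (\<integral>w. f w * v w \<partial>M)"
    unfolding fv by (intro nn_integral_eq_integral) auto
  also have "\<dots> \<le> ennreal (snd (kdual M E) f * snd E v)"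
    by (intro ennreal_leI integral_le_kdual_norm f v)
  also have "\<dots> \<le> ennreal (snd (kdual M E) f * snd E x)"
    using \<open>snd E v \<le> snd E x\<close> kdual_norm_nonneg[OF f] by (intro ennreal_leI mult_left_mono)
  finally show ?thesis .
qed

lemma sub1_bidual: "sub1 E (kdual M (kdual M E))"
  unfolding sub1_def
proof (intro conjI ballI subsetI)
  fix x assume x: "x \<in> fst E"
  have "x \<in> fst (kdual M (kdual M E)) \<and> snd (kdual M (kdual M E)) x \<le> snd E x"
  proof (rule kdual_memI)
    fix f assume "f \<in> fst (kdual M E)"
    then show "(\<integral>\<^sup>+w. ennreal \<bar>x w * f w\<bar> \<partial>M) \<le> ennreal (snd E x * snd (kdual M E) f)"
      using nn_integral_abs_le_kdual_norm[of f x] x by (simp add: mult.commute)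
  qed (use kdual_subset_measurable[of M E] bis_measurable[OF bis x] bis_norm_nonneg[OF bis x] in auto)
  then show "x \<in> fst (kdual M (kdual M E))" "snd (kdual M (kdual M E)) x \<le> snd E x" by auto
qed

lemma sub1_kdual_antimono:
  assumes sub: "sub1 F E"
  shows "sub1 (kdual M E) (kdual M F)"
  unfolding sub1_def
proof (intro conjI ballI subsetI)
  fix f assume f: "f \<in> fst (kdual M E)"
  have "f \<in> fst (kdual M F) \<and> snd (kdual M F) f \<le> snd (kdual M E) f"
  proof (rule kdual_memI)
    fix x assume x: "x \<in> fst F"
    then have xE: "x \<in> fst E" and le: "snd E x \<le> snd F x" using sub unfolding sub1_def by auto
    have "(\<integral>\<^sup>+w. ennreal \<bar>f w * x w\<bar> \<partial>M) \<le> ennreal (snd (kdual M E) f * snd E x)"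
      by (rule nn_integral_abs_le_kdual_norm[OF f xE])
    also have "\<dots> \<le> ennreal (snd (kdual M E) f * snd F x)"
      using le kdual_norm_nonneg[OF f] by (intro ennreal_leI mult_left_mono)
    finally show "(\<integral>\<^sup>+w. ennreal \<bar>f w * x w\<bar> \<partial>M) \<le> ennreal (snd (kdual M E) f * snd F x)" .
  qed (use sub bis_measurable[OF bis] kdual_measurable[OF f] kdual_norm_nonneg[OF f] in \<open>auto simp: sub1_def\<close>)
  then show "f \<in> fst (kdual M F)" "snd (kdual M F) f \<le> snd (kdual M E) f" by auto
qed

lemma kdual_add:
  assumes f: "f \<in> fst (kdual M E)" and g: "g \<in> fst (kdual M E)"
  shows "(\<lambda>w. f w + g w) \<in> fst (kdual M E) \<and>
    snd (kdual M E) (\<lambda>w. f w + g w) \<le> snd (kdual M E) f + snd (kdual M E) g"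
proof (rule kdual_memI)
  fix x assume x: "x \<in> fst E"
  have "(\<integral>\<^sup>+w. ennreal \<bar>(f w + g w) * x w\<bar> \<partial>M) \<le>
      (\<integral>\<^sup>+w. ennreal \<bar>f w * x w\<bar> + ennreal \<bar>g w * x w\<bar> \<partial>M)"
    by (intro nn_integral_mono)
      (auto simp: distrib_right ennreal_plus[symmetric] simp del: ennreal_plus intro!: ennreal_leI abs_triangle_ineq)
  also have "\<dots> = (\<integral>\<^sup>+w. ennreal \<bar>f w * x w\<bar> \<partial>M) + (\<integral>\<^sup>+w. ennreal \<bar>g w * x w\<bar> \<partial>M)"
    using kdual_measurable[OF f] kdual_measurable[OF g] bis_measurable[OF bis x]
    by (intro nn_integral_add) auto
  also have "\<dots> \<le> ennreal (snd (kdual M E) f * snd E x) + ennreal (snd (kdual M E) g * snd E x)"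
    by (intro add_mono nn_integral_abs_le_kdual_norm f g x)
  also have "\<dots> = ennreal ((snd (kdual M E) f + snd (kdual M E) g) * snd E x)"
    using kdual_norm_nonneg[OF f] kdual_norm_nonneg[OF g] bis_norm_nonneg[OF bis x]
    by (simp add: distrib_right ennreal_plus[symmetric] del: ennreal_plus)
  finally show "(\<integral>\<^sup>+w. ennreal \<bar>(f w + g w) * x w\<bar> \<partial>M) \<le> \<dots>" .
qed (use bis_measurable[OF bis] kdual_measurable[OF f] kdual_measurable[OF g]
       kdual_norm_nonneg[OF f] kdual_norm_nonneg[OF g] in auto)

lemma kdual_scale:
  assumes f: "f \<in> fst (kdual M E)"
  shows "(\<lambda>w. c * f w) \<in> fst (kdual M E) \<and> snd (kdual M E) (\<lambda>w. c * f w) \<le> \<bar>c\<bar> * snd (kdual M E) f"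
proof (rule kdual_memI)
  fix x assume x: "x \<in> fst E"
  have "(\<integral>\<^sup>+w. ennreal \<bar>c * f w * x w\<bar> \<partial>M) = ennreal \<bar>c\<bar> * (\<integral>\<^sup>+w. ennreal \<bar>f w * x w\<bar> \<partial>M)"
    using kdual_measurable[OF f] bis_measurable[OF bis x]
    by (subst nn_integral_cmult[symmetric]) (auto simp: abs_mult ennreal_mult mult.assoc)
  also have "\<dots> \<le> ennreal \<bar>c\<bar> * ennreal (snd (kdual M E) f * snd E x)"
    by (intro mult_left_mono nn_integral_abs_le_kdual_norm f x) auto
  also have "\<dots> = ennreal (\<bar>c\<bar> * snd (kdual M E) f * snd E x)"
    using kdual_norm_nonneg[OF f] bis_norm_nonneg[OF bis x] by (simp add: ennreal_mult[symmetric] mult.assoc)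
  finally show "(\<integral>\<^sup>+w. ennreal \<bar>c * f w * x w\<bar> \<partial>M) \<le> \<dots>" .
qed (use bis_measurable[OF bis] kdual_measurable[OF f] kdual_norm_nonneg[OF f] in auto)

lemma kdual_norm_scale:
  assumes f: "f \<in> fst (kdual M E)"
  shows "snd (kdual M E) (\<lambda>w. c * f w) = \<bar>c\<bar> * snd (kdual M E) f"
proof (cases "c = 0")
  case True
  then show ?thesis using kdual_scale[OF f, of c] kdual_norm_nonneg[of "\<lambda>w. c * f w" M E] by auto
next
  case False
  have "snd (kdual M E) (\<lambda>w. inverse c * (c * f w)) \<le> \<bar>inverse c\<bar> * snd (kdual M E) (\<lambda>w. c * f w)"
    using kdual_scale[OF conjunct1[OF kdual_scale[OF f]]] by blast
  then have "\<bar>c\<bar> * snd (kdual M E) f \<le> snd (kdual M E) (\<lambda>w. c * f w)"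
    using False by (simp add: field_simps abs_inverse)
  then show ?thesis using kdual_scale[OF f, of c] by simp
qed

lemma kdual_diff:
  "f \<in> fst (kdual M E) \<Longrightarrow> g \<in> fst (kdual M E) \<Longrightarrow> (\<lambda>w. f w - g w) \<in> fst (kdual M E)"
  using kdual_add[of f "\<lambda>w. (-1) * g w"] kdual_scale[of g "-1"] by simp

lemma kdual_norm_diff_triangle:
  assumes a: "a \<in> fst (kdual M E)" and b: "b \<in> fst (kdual M E)" and c: "c \<in> fst (kdual M E)"
  shows "snd (kdual M E) (\<lambda>w. a w - c w) \<le>
    snd (kdual M E) (\<lambda>w. a w - b w) + snd (kdual M E) (\<lambda>w. c w - b w)"
proof -
  have ab: "(\<lambda>w. a w - b w) \<in> fst (kdual M E)" and cb: "(\<lambda>w. c w - b w) \<in> fst (kdual M E)"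
    using kdual_diff a b c by blast+
  have "(\<lambda>w. a w - c w) = (\<lambda>w. (a w - b w) + (-1) * (c w - b w))" by auto
  then have "snd (kdual M E) (\<lambda>w. a w - c w) \<le>
      snd (kdual M E) (\<lambda>w. a w - b w) + snd (kdual M E) (\<lambda>w. (-1) * (c w - b w))"
    using kdual_add[OF ab conjunct1[OF kdual_scale[OF cb, of "-1"]]] by simp
  also have "snd (kdual M E) (\<lambda>w. (-1) * (c w - b w)) = snd (kdual M E) (\<lambda>w. c w - b w)"
    using kdual_norm_scale[OF cb, of "-1"] by simp
  finally show ?thesis .
qed

lemma kdual_solid:
  assumes y: "y \<in> fst (kdual M E)" and x: "x \<in> borel_measurable M"
    and le: "AE w in M. \<bar>x w\<bar> \<le> \<bar>y w\<bar>"
  shows "x \<in> fst (kdual M E) \<and> snd (kdual M E) x \<le> snd (kdual M E) y"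
proof (rule kdual_memI[OF _ x kdual_norm_nonneg[OF y]])
  fix z assume z: "z \<in> fst E"
  have "(\<integral>\<^sup>+w. ennreal \<bar>x w * z w\<bar> \<partial>M) \<le> (\<integral>\<^sup>+w. ennreal \<bar>y w * z w\<bar> \<partial>M)"
    using le by (intro nn_integral_mono_AE) (auto simp: abs_mult intro!: ennreal_leI mult_right_mono)
  also have "\<dots> \<le> ennreal (snd (kdual M E) y * snd E z)"
    by (rule nn_integral_abs_le_kdual_norm[OF y z])
  finally show "(\<integral>\<^sup>+w. ennreal \<bar>x w * z w\<bar> \<partial>M) \<le> \<dots>" .
qed (use bis_measurable[OF bis] in auto)

lemma kdual_norm_eq_0D:
  assumes mw: "max_width M (fst E)" and f: "f \<in> fst (kdual M E)" and zero: "snd (kdual M E) f = 0"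
  shows "AE w in M. f w = 0"
proof -
  have "AE w in M. f w * x w = 0" if x: "x \<in> fst E" for x
  proof -
    have "(\<integral>\<^sup>+w. ennreal \<bar>f w * x w\<bar> \<partial>M) = 0"
      using nn_integral_abs_le_kdual_norm[OF f x] zero by simp
    then have "AE w in M. ennreal \<bar>f w * x w\<bar> = 0"
      using kdual_measurable[OF f] bis_measurable[OF bis x] by (simp add: nn_integral_0_iff_AE)
    then show ?thesis by eventually_elim simp
  qed
  then show ?thesis using mw kdual_measurable[OF f] unfolding max_width_def by blast
qed

end

section \<open>Completeness of the dual\<close>

lemma cauchy_geometric_subseq:
  fixes \<rho> :: "nat \<Rightarrow> nat \<Rightarrow> real"
  assumes "\<forall>e>0. \<exists>N. \<forall>i\<ge>N. \<forall>j\<ge>N. \<rho> i j < e"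
  obtains r where "mono r" and "\<And>k i. r k \<le> i \<Longrightarrow> \<rho> i (r k) < (1/2)^k"
proof -
  have "\<forall>k. \<exists>n. \<forall>i\<ge>n. \<forall>j\<ge>n. \<rho> i j < (1/2)^k" using assms by simp
  then obtain N where N: "\<And>k i j. N k \<le> i \<Longrightarrow> N k \<le> j \<Longrightarrow> \<rho> i j < (1/2)^k"
    by metis
  define r where "r k = (\<Sum>l\<le>k. N l)" for k
  have "mono r" unfolding r_def by (intro monoI sum_mono2) auto
  moreover have "N k \<le> r k" for k unfolding r_def by (rule member_le_sum) auto
  ultimately show ?thesis using N that by (meson order_trans)
qed

lemma max_width_AE_finite:
  assumes mw: "max_width M S" and S: "S \<subseteq> borel_measurable M" and g: "g \<in> borel_measurable M"
    and fin: "\<And>x. x \<in> S \<Longrightarrow> (\<integral>\<^sup>+w. g w * ennreal \<bar>x w\<bar> \<partial>M) < \<infinity>"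
  shows "AE w in M. g w < \<infinity>"
proof -
  define z :: "'a \<Rightarrow> real" where "z w = (if g w = \<infinity> then 1 else 0)" for w
  have "AE w in M. z w * x w = 0" if x: "x \<in> S" for x
  proof -
    have "AE w in M. g w * ennreal \<bar>x w\<bar> \<noteq> \<infinity>"
      using fin[OF x] g S x by (intro nn_integral_PInf_AE) auto
    then show ?thesis by eventually_elim (auto simp: z_def ennreal_top_mult split: if_splits)
  qed
  moreover have "z \<in> borel_measurable M" unfolding z_def using g by measurable
  ultimately have "AE w in M. z w = 0" using mw unfolding max_width_def by blast
  then show ?thesis by eventually_elim (auto simp: z_def top.not_eq_extremum split: if_splits)
qed

context
  fixes M :: "'a measure" and E :: "'a bis"
  assumes bis: "is_bis M E" and mw: "max_width M (fst E)"
begin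

lemma nn_integral_series_le_kdual_norms:
  assumes d: "\<And>j. d j \<in> fst (kdual M E)" and sum: "summable (\<lambda>j. snd (kdual M E) (d j))"
    and x: "x \<in> fst E"
  shows "(\<integral>\<^sup>+w. (\<Sum>j. ennreal \<bar>d j w\<bar>) * ennreal \<bar>x w\<bar> \<partial>M) \<le>
    ennreal ((\<Sum>j. snd (kdual M E) (d j)) * snd E x)"
proof -
  have "(\<integral>\<^sup>+w. (\<Sum>j. ennreal \<bar>d j w\<bar>) * ennreal \<bar>x w\<bar> \<partial>M) =
      (\<integral>\<^sup>+w. (\<Sum>j. ennreal \<bar>d j w * x w\<bar>) \<partial>M)"
    by (simp add: abs_mult ennreal_mult)
  also have "\<dots> = (\<Sum>j. \<integral>\<^sup>+w. ennreal \<bar>d j w * x w\<bar> \<partial>M)"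
    using kdual_measurable[OF d] bis_measurable[OF bis x] by (intro nn_integral_suminf) auto
  also have "\<dots> \<le> (\<Sum>j. ennreal (snd (kdual M E) (d j) * snd E x))"
    by (intro suminf_le summableI nn_integral_abs_le_kdual_norm[OF bis d x])
  also have "\<dots> = ennreal (\<Sum>j. snd (kdual M E) (d j) * snd E x)"
    using sum kdual_norm_nonneg[OF d] bis_norm_nonneg[OF bis x]
    by (intro suminf_ennreal2 summable_mult2) auto
  also have "(\<Sum>j. snd (kdual M E) (d j) * snd E x) = (\<Sum>j. snd (kdual M E) (d j)) * snd E x"
    by (rule suminf_mult2[OF sum, symmetric])
  finally show ?thesis .
qed

lemma kdual_series_converges:
  assumes d: "\<And>j. d j \<in> fst (kdual M E)" and sum: "summable (\<lambda>j. snd (kdual M E) (d j))"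
  obtains f where "\<And>k. (\<lambda>w. f w - (\<Sum>j<k. d j w)) \<in> fst (kdual M E) \<and>
    snd (kdual M E) (\<lambda>w. f w - (\<Sum>j<k. d j w)) \<le> (\<Sum>j. snd (kdual M E) (d (j + k)))"
proof -
  define G where "G w = (\<Sum>j. ennreal \<bar>d j w\<bar>)" for w
  have dm: "d j \<in> borel_measurable M" for j using kdual_measurable[OF d] .
  have Gm: "G \<in> borel_measurable M" unfolding G_def using dm by measurable
  have "AE w in M. G w < \<infinity>"
  proof (rule max_width_AE_finite[OF mw _ Gm])
    show "fst E \<subseteq> borel_measurable M" using bis_measurable[OF bis] by blast
    fix x assume "x \<in> fst E"
    then show "(\<integral>\<^sup>+w. G w * ennreal \<bar>x w\<bar> \<partial>M) < \<infinity>"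
      unfolding G_def by (rule le_less_trans[OF nn_integral_series_le_kdual_norms[OF d sum]]) simp
  qed
  define f where "f w = (if G w < \<infinity> then \<Sum>j. d j w else 0)" for w
  have fm: "f \<in> borel_measurable M" unfolding f_def using Gm dm by measurable
  have tail: "ennreal \<bar>f w - (\<Sum>j<k. d j w)\<bar> \<le> (\<Sum>j. ennreal \<bar>d (j + k) w\<bar>)"
    if fin: "G w < \<infinity>" for w k
  proof -
    have abs_sum: "summable (\<lambda>j. \<bar>d j w\<bar>)"
      using fin by (intro summable_suminf_not_top) (auto simp: G_def)
    then have "f w - (\<Sum>j<k. d j w) = (\<Sum>j. d (j + k) w)"
      using fin suminf_minus_initial_segment[OF summable_rabs_cancel[OF abs_sum], of k]
      by (simp add: f_def)
    also have "\<bar>\<dots>\<bar> \<le> (\<Sum>j. \<bar>d (j + k) w\<bar>)"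
      by (rule summable_rabs[OF summable_ignore_initial_segment[OF abs_sum]])
    finally have "ennreal \<bar>f w - (\<Sum>j<k. d j w)\<bar> \<le> ennreal (\<Sum>j. \<bar>d (j + k) w\<bar>)"
      by (rule ennreal_leI)
    also have "\<dots> = (\<Sum>j. ennreal \<bar>d (j + k) w\<bar>)"
      by (rule suminf_ennreal2[symmetric, OF _ summable_ignore_initial_segment[OF abs_sum]]) simp
    finally show ?thesis .
  qed
  show ?thesis
  proof (rule that, rule kdual_memI)
    fix k x assume x: "x \<in> fst E"
    have "(\<integral>\<^sup>+w. ennreal \<bar>(f w - (\<Sum>j<k. d j w)) * x w\<bar> \<partial>M) \<le>
        (\<integral>\<^sup>+w. (\<Sum>j. ennreal \<bar>d (j + k) w\<bar>) * ennreal \<bar>x w\<bar> \<partial>M)"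
      using \<open>AE w in M. G w < \<infinity>\<close>
      by (intro nn_integral_mono_AE) (auto elim!: eventually_mono simp: abs_mult ennreal_mult
          intro!: mult_right_mono tail)
    also have "\<dots> \<le> ennreal ((\<Sum>j. snd (kdual M E) (d (j + k))) * snd E x)"
      using d summable_ignore_initial_segment[OF sum]
      by (intro nn_integral_series_le_kdual_norms x) auto
    finally show "(\<integral>\<^sup>+w. ennreal \<bar>(f w - (\<Sum>j<k. d j w)) * x w\<bar> \<partial>M) \<le> \<dots>" .
  next
    fix k
    show "0 \<le> (\<Sum>j. snd (kdual M E) (d (j + k)))"
      using kdual_norm_nonneg[OF d] summable_ignore_initial_segment[OF sum] by (intro suminf_nonneg) auto
  qed (use bis_measurable[OF bis] fm dm in auto)
qed

lemma kdual_complete: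
  assumes X: "\<And>k. X k \<in> fst (kdual M E)"
    and cauchy: "\<forall>e>0. \<exists>N. \<forall>i\<ge>N. \<forall>j\<ge>N. snd (kdual M E) (\<lambda>w. X i w - X j w) < e"
  shows "\<exists>g\<in>fst (kdual M E). (\<lambda>k. snd (kdual M E) (\<lambda>w. X k w - g w)) \<longlonglongrightarrow> 0"
proof -
  let ?n = "snd (kdual M E)"
  obtain r where "mono r" and rX: "\<And>k i. r k \<le> i \<Longrightarrow> ?n (\<lambda>w. X i w - X (r k) w) < (1/2)^k"
    using cauchy_geometric_subseq[of "\<lambda>i j. ?n (\<lambda>w. X i w - X j w)"] cauchy by blast
  define d where "d j = (\<lambda>w. X (r (Suc j)) w - X (r j) w)" for j
  have d: "d j \<in> fst (kdual M E)" for j unfolding d_def by (intro kdual_diff[OF bis] X)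
  have "?n (d j) \<le> (1/2)^j" for j
    using rX[of j "r (Suc j)"] \<open>mono r\<close> by (simp add: d_def mono_def)
  then have sum: "summable (\<lambda>j. ?n (d j))"
    using kdual_norm_nonneg[OF d]
    by (intro summable_comparison_test'[OF summable_geometric, of "1/2"]) auto
  obtain f where f: "\<And>k. (\<lambda>w. f w - (\<Sum>j<k. d j w)) \<in> fst (kdual M E) \<and>
      ?n (\<lambda>w. f w - (\<Sum>j<k. d j w)) \<le> (\<Sum>j. ?n (d (j + k)))"
    using kdual_series_converges[OF d sum] by blast
  define g where "g w = X (r 0) w + f w" for w
  have "(\<Sum>j<k. d j w) = X (r k) w - X (r 0) w" for k w
    unfolding d_def by (rule sum_lessThan_telescope)
  then have g_sub: "(\<lambda>w. g w - X (r k) w) = (\<lambda>w. f w - (\<Sum>j<k. d j w))" for k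
    by (auto simp: g_def)
  have "f \<in> fst (kdual M E)" using conjunct1[OF f[of 0]] by simp
  then have g: "g \<in> fst (kdual M E)" unfolding g_def using kdual_add[OF bis X[of "r 0"]] by blast
  have "(\<lambda>k. (\<Sum>j. ?n (d j)) - (\<Sum>j<k. ?n (d j))) \<longlonglongrightarrow> 0"
    using tendsto_diff[OF tendsto_const[of "\<Sum>j. ?n (d j)"] summable_LIMSEQ[OF sum]] by simp
  then have bound_lim: "(\<lambda>k. (1/2)^k + (\<Sum>j. ?n (d (j + k)))) \<longlonglongrightarrow> 0"
    by (intro tendsto_add_zero LIMSEQ_power_zero) (auto simp: suminf_minus_initial_segment[OF sum])
  have "(\<lambda>i. ?n (\<lambda>w. X i w - g w)) \<longlonglongrightarrow> 0"
  proof (rule LIMSEQ_I)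
    fix e :: real assume "0 < e"
    then obtain k where "\<forall>n\<ge>k. (1/2)^n + (\<Sum>j. ?n (d (j + n))) < e"
      using order_tendstoD(2)[OF bound_lim] unfolding eventually_sequentially by blast
    then have k: "(1/2)^k + (\<Sum>j. ?n (d (j + k))) < e" by simp
    have "?n (\<lambda>w. X i w - g w) < e" if i: "r k \<le> i" for i
      using kdual_norm_diff_triangle[OF bis X X g, of i "r k"] rX[OF i] f[of k] k
      unfolding g_sub by linarith
    then show "\<exists>N. \<forall>i\<ge>N. norm (?n (\<lambda>w. X i w - g w) - 0) < e"
      using kdual_norm_nonneg[OF kdual_diff[OF bis X g]] by auto
  qed
  with g show ?thesis by blast
qed

lemma kdual_is_bis: "is_bis M (kdual M E)"
proof (rule is_bisI)
  show "(\<lambda>_. 0) \<in> fst (kdual M E)"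
    using kdual_memI[of E M "\<lambda>_. 0" 0] bis_measurable[OF bis] by auto
qed (simp_all add: kdual_subset_measurable kdual_add[OF bis] kdual_scale[OF bis] kdual_norm_nonneg
      kdual_norm_eq_0D[OF bis mw] kdual_norm_scale[OF bis] kdual_complete kdual_solid[OF bis])

end

lemma bis_eq_kdual_triple:
  assumes bis: "is_bis M E" and mw: "max_width M (fst E)" and mw': "max_width M (fst (kdual M E))"
  shows "bis_eq (kdual M E) (kdual M (kdual M (kdual M E)))"
proof (rule sub1_antisym)
  show "sub1 (kdual M E) (kdual M (kdual M (kdual M E)))"
    by (rule sub1_bidual[OF kdual_is_bis[OF bis mw]])
  show "sub1 (kdual M (kdual M (kdual M E))) (kdual M E)"
    by (rule sub1_kdual_antimono[OF kdual_is_bis[OF kdual_is_bis[OF bis mw] mw'] sub1_bidual[OF bis]])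
qed

lemma sub1_bidual_mono:
  assumes bisE: "is_bis M E" and mw: "max_width M (fst E)" and bisF: "is_bis M F"
    and sub: "sub1 E F"
  shows "sub1 (kdual M (kdual M E)) (kdual M (kdual M F))"
  by (rule sub1_kdual_antimono[OF kdual_is_bis[OF bisE mw] sub1_kdual_antimono[OF bisF sub]])

section \<open>Order continuous elements\<close>

(* the range of a decreasing net |x| \<ge> x_i \<down> 0 *)
definition vanishing_net :: "'a measure \<Rightarrow> ('a \<Rightarrow> real) \<Rightarrow> ('a \<Rightarrow> real) set \<Rightarrow> bool" where
  "vanishing_net M x D \<longleftrightarrow> D \<subseteq> borel_measurable M \<and> D \<noteq> {} \<and>
     (\<forall>a\<in>D. \<forall>b\<in>D. \<exists>c\<in>D. (AE w in M. c w \<le> a w) \<and> (AE w in M. c w \<le> b w)) \<and>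
     (\<forall>d\<in>D. AE w in M. 0 \<le> d w \<and> d w \<le> \<bar>x w\<bar>) \<and>
     (\<forall>z\<in>borel_measurable M. (\<forall>d\<in>D. AE w in M. z w \<le> d w) \<longrightarrow> (AE w in M. z w \<le> 0))"

lemma vanishing_netD:
  assumes "vanishing_net M x D"
  shows "D \<subseteq> borel_measurable M" and "D \<noteq> {}"
    and "\<And>d. d \<in> D \<Longrightarrow> AE w in M. 0 \<le> d w \<and> d w \<le> \<bar>x w\<bar>"
    and "\<And>a b. a \<in> D \<Longrightarrow> b \<in> D \<Longrightarrow> \<exists>c\<in>D. (AE w in M. c w \<le> a w) \<and> (AE w in M. c w \<le> b w)"
  using assms unfolding vanishing_net_def by blast+

lemma oc_elem_iff_vanishing_net:
  "oc_elem M E x \<longleftrightarrow> (\<forall>D. vanishing_net M x D \<longrightarrow> (\<forall>e>0. \<exists>d\<in>D. snd E d < e))"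
  unfolding oc_elem_def vanishing_net_def ..

lemma vanishing_net_mono:
  assumes D: "vanishing_net M y D" and le: "AE w in M. \<bar>y w\<bar> \<le> \<bar>x w\<bar>"
  shows "vanishing_net M x D"
proof -
  have "AE w in M. 0 \<le> d w \<and> d w \<le> \<bar>x w\<bar>" if "d \<in> D" for d
    using vanishing_netD(3)[OF D that] le by eventually_elim auto
  then show ?thesis using D unfolding vanishing_net_def by blast
qed

lemma vanishing_net_image:
  assumes D: "vanishing_net M x D"
    and meas: "\<And>d. d \<in> D \<Longrightarrow> (\<lambda>w. \<phi> w (d w)) \<in> borel_measurable M"
    and mono: "\<And>w s t. s \<le> t \<Longrightarrow> \<phi> w s \<le> \<phi> w t"
    and below: "\<And>w t. 0 \<le> t \<Longrightarrow> 0 \<le> \<phi> w t \<and> \<phi> w t \<le> t"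
    and bound: "\<And>d. d \<in> D \<Longrightarrow> AE w in M. \<phi> w (d w) \<le> \<bar>y w\<bar>"
  shows "vanishing_net M y ((\<lambda>d w. \<phi> w (d w)) ` D)"
  unfolding vanishing_net_def
proof (intro conjI ballI impI)
  show "(\<lambda>d w. \<phi> w (d w)) ` D \<subseteq> borel_measurable M" using meas by blast
  show "(\<lambda>d w. \<phi> w (d w)) ` D \<noteq> {}" using vanishing_netD(2)[OF D] by blast
  show "\<exists>c\<in>(\<lambda>d w. \<phi> w (d w)) ` D. (AE w in M. c w \<le> a w) \<and> (AE w in M. c w \<le> b w)"
    if a: "a \<in> (\<lambda>d w. \<phi> w (d w)) ` D" and b: "b \<in> (\<lambda>d w. \<phi> w (d w)) ` D" for a b
  proof -
    obtain a' b' where "a' \<in> D" "b' \<in> D" and ab: "a = (\<lambda>w. \<phi> w (a' w))" "b = (\<lambda>w. \<phi> w (b' w))"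
      using a b by blast
    then obtain c where c: "c \<in> D" and ca: "AE w in M. c w \<le> a' w" and cb: "AE w in M. c w \<le> b' w"
      using vanishing_netD(4)[OF D] by meson
    have "AE w in M. \<phi> w (c w) \<le> a w" using ca unfolding ab by eventually_elim (rule mono)
    moreover have "AE w in M. \<phi> w (c w) \<le> b w" using cb unfolding ab by eventually_elim (rule mono)
    ultimately show ?thesis using c by (intro bexI[of _ "\<lambda>w. \<phi> w (c w)"]) auto
  qed
  show "AE w in M. 0 \<le> a w \<and> a w \<le> \<bar>y w\<bar>" if a: "a \<in> (\<lambda>d w. \<phi> w (d w)) ` D" for a
  proof -
    obtain d where d: "d \<in> D" and a: "a = (\<lambda>w. \<phi> w (d w))" using a by blast
    show ?thesis using vanishing_netD(3)[OF D d] bound[OF d] unfolding a by eventually_elim (use below in auto)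
  qed
  fix z :: "'a \<Rightarrow> real" assume z: "z \<in> borel_measurable M" and
    le: "\<forall>a\<in>(\<lambda>d w. \<phi> w (d w)) ` D. AE w in M. z w \<le> a w"
  have "AE w in M. z w \<le> d w" if d: "d \<in> D" for d
  proof -
    have "AE w in M. z w \<le> \<phi> w (d w)" using bspec[OF le imageI[OF d]] by simp
    with vanishing_netD(3)[OF D d] show ?thesis by eventually_elim (metis below order_trans)
  qed
  then show "AE w in M. z w \<le> 0" using D z unfolding vanishing_net_def by blast
qed

lemma bis_norm_le_min_plus_excess:
  assumes bis: "is_bis M E"
    and "(\<lambda>w. min (d w) \<bar>a w\<bar>) \<in> fst E" and "(\<lambda>w. max (d w - \<bar>a w\<bar>) 0) \<in> fst E"
  shows "snd E d \<le> snd E (\<lambda>w. min (d w) \<bar>a w\<bar>) + snd E (\<lambda>w. max (d w - \<bar>a w\<bar>) 0)"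
proof -
  have "(\<lambda>w. min (d w) \<bar>a w\<bar> + max (d w - \<bar>a w\<bar>) 0) = d" by (auto simp: min_def max_def)
  then show ?thesis using bis_norm_triangle[OF bis assms(2,3)] by simp
qed

lemma oc_elem_mono:
  assumes "oc_elem M E x" and "AE w in M. \<bar>y w\<bar> \<le> \<bar>x w\<bar>"
  shows "oc_elem M E y"
  using assms vanishing_net_mono unfolding oc_elem_iff_vanishing_net by blast

context
  fixes M :: "'a measure" and E :: "'a bis"
  assumes bis: "is_bis M E"
begin

lemma oc_elem_zero: "oc_elem M E (\<lambda>_. 0)"
  unfolding oc_elem_iff_vanishing_net
proof (intro allI impI)
  fix D and e :: real assume D: "vanishing_net M (\<lambda>_. 0) D" and "0 < e"
  obtain d where d: "d \<in> D" using vanishing_netD(2)[OF D] by blast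
  have "AE w in M. \<bar>d w\<bar> \<le> \<bar>0\<bar>" using vanishing_netD(3)[OF D d] by eventually_elim auto
  then have "snd E d \<le> snd E (\<lambda>_. 0)"
    using bis_solid[OF bis bis_zero[OF bis]] vanishing_netD(1)[OF D] d by auto
  also have "snd E (\<lambda>_. 0) = 0" using bis_norm_scale[OF bis bis_zero[OF bis], of 0] by simp
  finally have "snd E d < e" using \<open>0 < e\<close> by linarith
  with d show "\<exists>d\<in>D. snd E d < e" by blast
qed

lemma oc_elem_vanishing_image:
  assumes x: "x \<in> fst E" "oc_elem M E x" and D: "vanishing_net M v D" and e: "0 < e"
    and meas: "\<And>d. d \<in> D \<Longrightarrow> (\<lambda>w. \<phi> w (d w)) \<in> borel_measurable M"
    and mono: "\<And>w s t. s \<le> t \<Longrightarrow> \<phi> w s \<le> \<phi> w t"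
    and below: "\<And>w t. 0 \<le> t \<Longrightarrow> 0 \<le> \<phi> w t \<and> \<phi> w t \<le> t"
    and bound: "\<And>d. d \<in> D \<Longrightarrow> AE w in M. \<phi> w (d w) \<le> \<bar>x w\<bar>"
  shows "\<exists>d\<in>D. \<forall>c\<in>D. (AE w in M. c w \<le> d w) \<longrightarrow>
    (\<lambda>w. \<phi> w (c w)) \<in> fst E \<and> snd E (\<lambda>w. \<phi> w (c w)) < e"
proof -
  have "vanishing_net M x ((\<lambda>d w. \<phi> w (d w)) ` D)"
    by (rule vanishing_net_image[OF D meas mono below bound])
  then obtain d where d: "d \<in> D" and small: "snd E (\<lambda>w. \<phi> w (d w)) < e"
    using x(2) e unfolding oc_elem_iff_vanishing_net by blast
  have "AE w in M. \<bar>\<phi> w (d w)\<bar> \<le> \<bar>x w\<bar>"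
    using vanishing_netD(3)[OF D d] bound[OF d] by eventually_elim (use below in force)
  then have \<phi>d: "(\<lambda>w. \<phi> w (d w)) \<in> fst E" using bis_solid[OF bis x(1) meas[OF d]] by blast
  have "(\<lambda>w. \<phi> w (c w)) \<in> fst E \<and> snd E (\<lambda>w. \<phi> w (c w)) < e"
    if c: "c \<in> D" and cd: "AE w in M. c w \<le> d w" for c
  proof -
    have "AE w in M. \<bar>\<phi> w (c w)\<bar> \<le> \<bar>\<phi> w (d w)\<bar>"
      using vanishing_netD(3)[OF D c] cd by eventually_elim (use below mono in force)
    then show ?thesis using bis_solid[OF bis \<phi>d meas[OF c]] small by auto
  qed
  with d show ?thesis by blast
qed

lemma oc_elem_add:
  assumes x: "x \<in> fst E" "oc_elem M E x" and y: "y \<in> fst E" "oc_elem M E y"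
  shows "oc_elem M E (\<lambda>w. x w + y w)"
  unfolding oc_elem_iff_vanishing_net
proof (intro allI impI)
  fix D and e :: real assume D: "vanishing_net M (\<lambda>w. x w + y w) D" and e: "0 < e"
  \<comment> \<open>split c \<in> D as min c |x| + max (c - |x|) 0: a net below |x| plus a net below |y|\<close>
  have xm: "x \<in> borel_measurable M" using bis_measurable[OF bis x(1)] .
  have Dm: "d \<in> borel_measurable M" if "d \<in> D" for d using vanishing_netD(1)[OF D] that by blast
  have "\<exists>d1\<in>D. \<forall>c\<in>D. (AE w in M. c w \<le> d1 w) \<longrightarrow>
      (\<lambda>w. min (c w) \<bar>x w\<bar>) \<in> fst E \<and> snd E (\<lambda>w. min (c w) \<bar>x w\<bar>) < e / 2"
    by (rule oc_elem_vanishing_image[OF x D half_gt_zero[OF e]]) (use Dm xm in \<open>auto intro: AE_I2\<close>)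
  then obtain d1 where d1: "d1 \<in> D" and small1: "\<And>c. c \<in> D \<Longrightarrow> AE w in M. c w \<le> d1 w \<Longrightarrow>
      (\<lambda>w. min (c w) \<bar>x w\<bar>) \<in> fst E \<and> snd E (\<lambda>w. min (c w) \<bar>x w\<bar>) < e / 2"
    by blast
  have "\<exists>d2\<in>D. \<forall>c\<in>D. (AE w in M. c w \<le> d2 w) \<longrightarrow>
      (\<lambda>w. max (c w - \<bar>x w\<bar>) 0) \<in> fst E \<and> snd E (\<lambda>w. max (c w - \<bar>x w\<bar>) 0) < e / 2"
  proof (rule oc_elem_vanishing_image[OF y D half_gt_zero[OF e]])
    fix d assume d: "d \<in> D"
    from vanishing_netD(3)[OF D d] show "AE w in M. max (d w - \<bar>x w\<bar>) 0 \<le> \<bar>y w\<bar>"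
    proof eventually_elim
      case (elim w)
      then show ?case using abs_triangle_ineq[of "x w" "y w"] by simp
    qed
  qed (use Dm xm in auto)
  then obtain d2 where d2: "d2 \<in> D" and small2: "\<And>c. c \<in> D \<Longrightarrow> AE w in M. c w \<le> d2 w \<Longrightarrow>
      (\<lambda>w. max (c w - \<bar>x w\<bar>) 0) \<in> fst E \<and> snd E (\<lambda>w. max (c w - \<bar>x w\<bar>) 0) < e / 2"
    by blast
  obtain c where c: "c \<in> D" "AE w in M. c w \<le> d1 w" "AE w in M. c w \<le> d2 w"
    using vanishing_netD(4)[OF D d1 d2] by blast
  have "snd E c \<le> snd E (\<lambda>w. min (c w) \<bar>x w\<bar>) + snd E (\<lambda>w. max (c w - \<bar>x w\<bar>) 0)"
    using small1[OF c(1,2)] small2[OF c(1,3)] by (intro bis_norm_le_min_plus_excess[OF bis]) auto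
  also have "\<dots> < e" using small1[OF c(1,2)] small2[OF c(1,3)] by simp
  finally show "\<exists>d\<in>D. snd E d < e" using c(1) by blast
qed

lemma oc_elem_scale:
  assumes x: "x \<in> fst E" "oc_elem M E x"
  shows "oc_elem M E (\<lambda>w. c * x w)"
proof -
  have ax: "(\<lambda>w. \<bar>x w\<bar>) \<in> fst E"
    using bis_solid[OF bis x(1)] bis_measurable[OF bis x(1)] by auto
  have oax: "oc_elem M E (\<lambda>w. \<bar>x w\<bar>)" by (rule oc_elem_mono[OF x(2)]) auto
  have n: "oc_elem M E (\<lambda>w. real n * \<bar>x w\<bar>)" for n
  proof (induction n)
    case 0
    show ?case by (rule oc_elem_mono[OF x(2)]) auto
  next
    case (Suc n)
    have "oc_elem M E (\<lambda>w. \<bar>x w\<bar> + real n * \<bar>x w\<bar>)"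
      by (rule oc_elem_add[OF ax oax bis_scale[OF bis ax] Suc])
    then show ?case by (simp add: algebra_simps)
  qed
  have "\<bar>c\<bar> \<le> real (nat \<lceil>\<bar>c\<bar>\<rceil>)" by (rule real_nat_ceiling_ge)
  then have "AE w in M. \<bar>c * x w\<bar> \<le> \<bar>real (nat \<lceil>\<bar>c\<bar>\<rceil>) * \<bar>x w\<bar>\<bar>"
    by (auto simp: abs_mult intro!: mult_right_mono)
  then show ?thesis by (rule oc_elem_mono[OF n])
qed

lemma oc_elem_closed:
  assumes X: "\<And>k. X k \<in> fst E" and oc: "\<And>k. oc_elem M E (X k)" and x: "x \<in> fst E"
    and lim: "(\<lambda>k. snd E (\<lambda>w. X k w - x w)) \<longlonglongrightarrow> 0"
  shows "oc_elem M E x"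
  unfolding oc_elem_iff_vanishing_net
proof (intro allI impI)
  fix D and e :: real assume D: "vanishing_net M x D" and e: "0 < e"
  obtain k where k: "snd E (\<lambda>w. X k w - x w) < e / 2"
    using order_tendstoD(2)[OF lim half_gt_zero[OF e]] unfolding eventually_sequentially by blast
  have Xm: "X k \<in> borel_measurable M" using bis_measurable[OF bis X[of k]] .
  have Dm: "d \<in> borel_measurable M" if "d \<in> D" for d using vanishing_netD(1)[OF D] that by blast
  have "\<exists>d\<in>D. \<forall>c\<in>D. (AE w in M. c w \<le> d w) \<longrightarrow>
      (\<lambda>w. min (c w) \<bar>X k w\<bar>) \<in> fst E \<and> snd E (\<lambda>w. min (c w) \<bar>X k w\<bar>) < e / 2"
    by (rule oc_elem_vanishing_image[OF X[of k] oc[of k] D half_gt_zero[OF e]])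
      (use Dm Xm in \<open>auto intro: AE_I2\<close>)
  then obtain d where d: "d \<in> D" and small: "(\<lambda>w. min (d w) \<bar>X k w\<bar>) \<in> fst E"
    "snd E (\<lambda>w. min (d w) \<bar>X k w\<bar>) < e / 2"
    by (metis (no_types, lifting) AE_I2 order_refl)
  have "AE w in M. \<bar>max (d w - \<bar>X k w\<bar>) 0\<bar> \<le> \<bar>X k w - x w\<bar>"
    using vanishing_netD(3)[OF D d] by eventually_elim auto
  then have excess: "(\<lambda>w. max (d w - \<bar>X k w\<bar>) 0) \<in> fst E"
    "snd E (\<lambda>w. max (d w - \<bar>X k w\<bar>) 0) \<le> snd E (\<lambda>w. X k w - x w)"
    using bis_solid[OF bis bis_diff[OF bis X x]] Dm[OF d] Xm by auto
  have "snd E d \<le> snd E (\<lambda>w. min (d w) \<bar>X k w\<bar>) + snd E (\<lambda>w. max (d w - \<bar>X k w\<bar>) 0)"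
    by (rule bis_norm_le_min_plus_excess[OF bis small(1) excess(1)])
  also have "\<dots> < e" using small(2) excess(2) k by simp
  finally show "\<exists>d\<in>D. snd E d < e" using d by blast
qed

end

lemma mem_oc_part_iff: "x \<in> fst (oc_part M E) \<longleftrightarrow> x \<in> fst E \<and> oc_elem M E x"
  by (simp add: oc_part_def)

lemma oc_part_norm [simp]: "snd (oc_part M E) = snd E"
  by (simp add: oc_part_def)

lemma oc_elem_oc_part: "oc_elem M (oc_part M E) = oc_elem M E"
  by (simp add: oc_elem_iff_vanishing_net[abs_def])

lemma sub1_oc_part: "sub1 (oc_part M E) E"
  by (simp add: sub1_def mem_oc_part_iff subset_iff)

lemma oc_part_idem: "bis_eq (oc_part M (oc_part M E)) (oc_part M E)"
  by (auto simp: bis_eq_def mem_oc_part_iff oc_elem_oc_part)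

lemma oc_part_is_bis:
  assumes bis: "is_bis M E"
  shows "is_bis M (oc_part M E)"
proof (rule is_bisI)
  show "fst (oc_part M E) \<subseteq> borel_measurable M"
    using bis_measurable[OF bis] by (auto simp: mem_oc_part_iff)
  show "(\<lambda>_. 0) \<in> fst (oc_part M E)"
    using bis_zero[OF bis] oc_elem_zero[OF bis] by (simp add: mem_oc_part_iff)
  show "(\<lambda>w. x w + y w) \<in> fst (oc_part M E)" if "x \<in> fst (oc_part M E)" "y \<in> fst (oc_part M E)" for x y
    using that bis_add[OF bis] oc_elem_add[OF bis] by (simp add: mem_oc_part_iff)
  show "(\<lambda>w. c * x w) \<in> fst (oc_part M E)" if "x \<in> fst (oc_part M E)" for x c
    using that bis_scale[OF bis] oc_elem_scale[OF bis] by (simp add: mem_oc_part_iff)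
  show "0 \<le> snd (oc_part M E) x" if "x \<in> fst (oc_part M E)" for x
    using that bis_norm_nonneg[OF bis] by (simp add: mem_oc_part_iff)
  show "AE w in M. x w = 0" if "x \<in> fst (oc_part M E)" "snd (oc_part M E) x = 0" for x
    using that bis_norm_eq_0D[OF bis] by (simp add: mem_oc_part_iff)
  show "snd (oc_part M E) (\<lambda>w. x w + y w) \<le> snd (oc_part M E) x + snd (oc_part M E) y"
    if "x \<in> fst (oc_part M E)" "y \<in> fst (oc_part M E)" for x y
    using that bis_norm_triangle[OF bis] by (simp add: mem_oc_part_iff)
  show "snd (oc_part M E) (\<lambda>w. c * x w) = \<bar>c\<bar> * snd (oc_part M E) x" if "x \<in> fst (oc_part M E)" for x c
    using that bis_norm_scale[OF bis] by (simp add: mem_oc_part_iff)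
next
  fix X :: "nat \<Rightarrow> 'a \<Rightarrow> real" assume X: "\<And>k. X k \<in> fst (oc_part M E)"
    and "\<forall>e>0. \<exists>N. \<forall>i\<ge>N. \<forall>j\<ge>N. snd (oc_part M E) (\<lambda>w. X i w - X j w) < e"
  then obtain x where x: "x \<in> fst E" and lim: "(\<lambda>k. snd E (\<lambda>w. X k w - x w)) \<longlonglongrightarrow> 0"
    using bis_complete[OF bis, of X] by (auto simp: mem_oc_part_iff)
  have "oc_elem M E x"
    using X oc_elem_closed[OF bis _ _ x lim] by (simp add: mem_oc_part_iff)
  with x lim show "\<exists>x\<in>fst (oc_part M E). (\<lambda>k. snd (oc_part M E) (\<lambda>w. X k w - x w)) \<longlonglongrightarrow> 0"
    by (auto simp: mem_oc_part_iff)
next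
  fix x y assume "y \<in> fst (oc_part M E)" "x \<in> borel_measurable M" "AE w in M. \<bar>x w\<bar> \<le> \<bar>y w\<bar>"
  then show "x \<in> fst (oc_part M E) \<and> snd (oc_part M E) x \<le> snd (oc_part M E) y"
    using bis_solid[OF bis] oc_elem_mono[of M E y x] by (auto simp: mem_oc_part_iff)
qed

lemma sub1_oc_part_mono:
  assumes bis: "is_bis M F" and sub: "sub1 F E"
  shows "sub1 (oc_part M F) (oc_part M E)"
proof -
  have "oc_elem M E x" if x: "x \<in> fst F" and oc: "oc_elem M F x" for x
    unfolding oc_elem_iff_vanishing_net
  proof (intro allI impI)
    fix D and e :: real assume D: "vanishing_net M x D" and "0 < e"
    then obtain d where d: "d \<in> D" and "snd F d < e"
      using oc unfolding oc_elem_iff_vanishing_net by blast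
    have "AE w in M. \<bar>d w\<bar> \<le> \<bar>x w\<bar>" using vanishing_netD(3)[OF D d] by eventually_elim auto
    then have "d \<in> fst F" using bis_solid[OF bis x] vanishing_netD(1)[OF D] d by blast
    then have "snd E d < e" using sub \<open>snd F d < e\<close> unfolding sub1_def by fastforce
    with d show "\<exists>d\<in>D. snd E d < e" by blast
  qed
  then show ?thesis using sub unfolding sub1_def by (auto simp: mem_oc_part_iff)
qed

lemma oc_part_cong:
  assumes "is_bis M A" and "is_bis M B" and "bis_eq A B"
  shows "bis_eq (oc_part M A) (oc_part M B)"
  using sub1_oc_part_mono[OF assms(1)] sub1_oc_part_mono[OF assms(2)] bis_eq_imp_sub1[OF assms(3)]
  by (blast intro: sub1_antisym)

lemma foundation_oc_part:
  assumes bis: "is_bis M E" and mw: "max_width M (fst (oc_part M E))"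
  shows "foundation M (fst (oc_part M E)) (fst E)"
  unfolding foundation_def
proof (intro conjI ballI allI impI)
  show "fst (oc_part M E) \<subseteq> fst E" by (auto simp: mem_oc_part_iff)
  show "(\<lambda>_. 0) \<in> fst (oc_part M E)"
    using bis_zero[OF bis] oc_elem_zero[OF bis] by (simp add: mem_oc_part_iff)
  show "(\<lambda>w. x w + y w) \<in> fst (oc_part M E)" if "x \<in> fst (oc_part M E)" "y \<in> fst (oc_part M E)" for x y
    using that bis_add[OF bis] oc_elem_add[OF bis] by (simp add: mem_oc_part_iff)
  show "(\<lambda>w. c * x w) \<in> fst (oc_part M E)" if "x \<in> fst (oc_part M E)" for x c
    using that bis_scale[OF bis] oc_elem_scale[OF bis] by (simp add: mem_oc_part_iff)
  show "x \<in> fst (oc_part M E)"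
    if "y \<in> fst (oc_part M E)" "x \<in> fst E" "AE w in M. \<bar>x w\<bar> \<le> \<bar>y w\<bar>" for x y
    using that oc_elem_mono[of M E y x] by (simp add: mem_oc_part_iff)
qed (fact mw)

lemma foundation_oc_part_transfer:
  assumes "is_bis M A" and "is_bis M B" and eq: "bis_eq A B"
    and "foundation M (fst (oc_part M A)) (fst A)"
  shows "foundation M (fst (oc_part M B)) (fst B)"
  using assms oc_part_cong[OF assms(1-3)] by (simp add: bis_eq_def)

section \<open>The dual of a foundation\<close>

lemma foundation_AE_le:
  assumes bis: "is_bis M E" and fd: "foundation M G (fst E)" and x: "x \<in> fst E"
    and h: "h \<in> borel_measurable M" and W: "W \<in> borel_measurable M"
    and le: "\<And>y. y \<in> G \<Longrightarrow> \<forall>w\<in>space M. 0 \<le> y w \<and> y w \<le> \<bar>x w\<bar> \<Longrightarrow>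
       AE w in M. ennreal \<bar>h w\<bar> * ennreal (y w) \<le> ennreal \<bar>h w\<bar> * W w"
  shows "AE w in M. ennreal \<bar>h w\<bar> * ennreal \<bar>x w\<bar> \<le> ennreal \<bar>h w\<bar> * W w"
proof -
  \<comment> \<open>the functions min |x| (k |y|) with y \<in> G exhaust |x| on the support of y\<close>
  define B where "B = {w \<in> space M. \<not> ennreal \<bar>h w\<bar> * ennreal \<bar>x w\<bar> \<le> ennreal \<bar>h w\<bar> * W w}"
  have xm: "x \<in> borel_measurable M" using bis_measurable[OF bis x] .
  have B: "B \<in> sets M" unfolding B_def using h W xm by measurable
  have "AE w in M. indicator B w * y w = (0::real)" if y: "y \<in> G" for y
  proof -
    define v where "v k w = min \<bar>x w\<bar> (real k * \<bar>y w\<bar>)" for k w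
    have vG: "v k \<in> G" for k
    proof (rule foundation_solid[OF bis fd])
      show "(\<lambda>w. real k * y w) \<in> G" using foundationD(4)[OF fd y] .
      have "y \<in> borel_measurable M" using foundationD(1)[OF fd] y bis_measurable[OF bis] by blast
      then show "v k \<in> borel_measurable M" unfolding v_def using xm by measurable
    qed (auto simp: v_def abs_mult)
    then have "\<forall>k. AE w in M. ennreal \<bar>h w\<bar> * ennreal (v k w) \<le> ennreal \<bar>h w\<bar> * W w"
      by (intro allI le vG) (auto simp: v_def)
    then have "AE w in M. \<forall>k. ennreal \<bar>h w\<bar> * ennreal (v k w) \<le> ennreal \<bar>h w\<bar> * W w"
      by (simp add: AE_all_countable)
    then show ?thesis
    proof eventually_elim
      case (elim w)
      show ?case
      proof (cases "y w = 0")
        case False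
        obtain k :: nat where "\<bar>x w\<bar> / \<bar>y w\<bar> \<le> real k" using real_arch_simple by blast
        then have "v k w = \<bar>x w\<bar>" using False by (simp add: v_def field_simps)
        then have "w \<notin> B" using spec[OF elim, of k] by (auto simp: B_def)
        then show ?thesis by simp
      qed simp
    qed
  qed
  then have "AE w in M. indicator B w = (0::real)"
    using foundationD(5)[OF fd] B unfolding max_width_def by auto
  with AE_space show ?thesis by eventually_elim (auto simp: B_def indicator_def split: if_splits)
qed

lemma nn_integral_weighted_SUP:
  assumes h: "h \<in> borel_measurable M" and u: "\<And>n. u n \<in> borel_measurable M"
    and inc: "\<And>n w. u n w \<le> u (Suc n) w"
  shows "(\<integral>\<^sup>+w. ennreal \<bar>h w\<bar> * (SUP n. ennreal (u n w)) \<partial>M) =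
    (SUP n. \<integral>\<^sup>+w. ennreal \<bar>h w\<bar> * ennreal (u n w) \<partial>M)"
proof -
  have "incseq (\<lambda>n w. ennreal \<bar>h w\<bar> * ennreal (u n w))"
    using inc by (intro incseq_SucI) (auto simp: le_fun_def intro!: mult_left_mono ennreal_leI)
  then show ?thesis
    unfolding SUP_mult_left_ennreal by (rule nn_integral_monotone_convergence_SUP) (use h u in simp)
qed

lemma AE_le_SUP_of_maximizing:
  assumes h: "h \<in> borel_measurable M" and u: "\<And>n. u n \<in> borel_measurable M"
    and inc: "\<And>n w. u n w \<le> u (Suc n) w" and v: "v \<in> borel_measurable M"
    and fin: "(SUP n. \<integral>\<^sup>+w. ennreal \<bar>h w\<bar> * ennreal (u n w) \<partial>M) \<noteq> \<infinity>"
    and maximizing: "\<And>n. (\<integral>\<^sup>+w. ennreal \<bar>h w\<bar> * ennreal (max (u n w) (v w)) \<partial>M) \<le>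
      (SUP n. \<integral>\<^sup>+w. ennreal \<bar>h w\<bar> * ennreal (u n w) \<partial>M)"
  shows "AE w in M. ennreal \<bar>h w\<bar> * ennreal (v w) \<le> ennreal \<bar>h w\<bar> * (SUP n. ennreal (u n w))"
proof -
  define U where "U w = (SUP n. ennreal (u n w))" for w
  define V where "V w = (SUP n. ennreal (max (u n w) (v w)))" for w
  have IU: "(\<integral>\<^sup>+w. ennreal \<bar>h w\<bar> * U w \<partial>M) =
      (SUP n. \<integral>\<^sup>+w. ennreal \<bar>h w\<bar> * ennreal (u n w) \<partial>M)"
    unfolding U_def using h u inc by (rule nn_integral_weighted_SUP)
  have "(\<integral>\<^sup>+w. ennreal \<bar>h w\<bar> * V w \<partial>M) =
      (SUP n. \<integral>\<^sup>+w. ennreal \<bar>h w\<bar> * ennreal (max (u n w) (v w)) \<partial>M)"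
    unfolding V_def using u v inc
    by (intro nn_integral_weighted_SUP h) (auto intro: max.coboundedI1 max.mono)
  also have "\<dots> \<le> (\<integral>\<^sup>+w. ennreal \<bar>h w\<bar> * U w \<partial>M)" unfolding IU by (rule SUP_least[OF maximizing])
  finally have VU:
    "(\<integral>\<^sup>+w. ennreal \<bar>h w\<bar> * V w \<partial>M) \<le> (\<integral>\<^sup>+w. ennreal \<bar>h w\<bar> * U w \<partial>M)" .
  have "AE w in M. ennreal \<bar>h w\<bar> * V w \<le> ennreal \<bar>h w\<bar> * U w"
  proof (rule ccontr)
    assume "\<not> ?thesis"
    moreover have "AE w in M. ennreal \<bar>h w\<bar> * U w \<le> ennreal \<bar>h w\<bar> * V w"
      unfolding U_def V_def by (intro AE_I2 mult_left_mono SUP_mono' ennreal_leI) auto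
    ultimately have "(\<integral>\<^sup>+w. ennreal \<bar>h w\<bar> * U w \<partial>M) < (\<integral>\<^sup>+w. ennreal \<bar>h w\<bar> * V w \<partial>M)"
      using fin h u v unfolding IU[symmetric] U_def V_def by (intro nn_integral_less) auto
    with VU show False by simp
  qed
  moreover have "ennreal \<bar>h w\<bar> * ennreal (v w) \<le> ennreal \<bar>h w\<bar> * V w" for w
    unfolding V_def by (intro mult_left_mono SUP_upper2[of 0]) (auto intro: ennreal_leI)
  ultimately show ?thesis unfolding U_def[symmetric] by (blast intro: eventually_mono order_trans)
qed

lemma Sup_max_closed_incseq:
  fixes \<Phi> :: "('a \<Rightarrow> real) \<Rightarrow> ennreal"
  assumes "T \<noteq> {}" and max: "\<And>a b. a \<in> T \<Longrightarrow> b \<in> T \<Longrightarrow> (\<lambda>w. max (a w) (b w)) \<in> T"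
    and mono: "\<And>a b. (\<And>w. a w \<le> b w) \<Longrightarrow> \<Phi> a \<le> \<Phi> b"
  obtains u where "\<And>n. u n \<in> T" and "\<And>n w. u n w \<le> u (Suc n) w"
    and "Sup (\<Phi> ` T) = (SUP n. \<Phi> (u n))"
proof -
  obtain f :: "nat \<Rightarrow> ennreal" where f: "range f \<subseteq> \<Phi> ` T" "Sup (\<Phi> ` T) = Sup (range f)"
    using ennreal_SUP_countable_SUP[OF assms(1)] by blast
  then have "\<forall>n. \<exists>y\<in>T. f n = \<Phi> y" by blast
  then obtain ys where ys: "\<And>n. ys n \<in> T" "\<And>n. f n = \<Phi> (ys n)" by metis
  define u where "u = rec_nat (ys 0) (\<lambda>n v w. max (v w) (ys (Suc n) w))"
  have u0: "u 0 = ys 0" and uS: "u (Suc n) = (\<lambda>w. max (u n w) (ys (Suc n) w))" for n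
    by (simp_all add: u_def)
  have uT: "u n \<in> T" for n by (induction n) (auto simp: u0 uS ys intro: max)
  have "ys n w \<le> u n w" for n w by (cases n) (auto simp: u0 uS)
  then have "f n \<le> \<Phi> (u n)" for n unfolding ys by (rule mono)
  then have "Sup (\<Phi> ` T) \<le> (SUP n. \<Phi> (u n))" unfolding f(2) by (intro SUP_mono) auto
  moreover have "(SUP n. \<Phi> (u n)) \<le> Sup (\<Phi> ` T)" by (intro SUP_least Sup_upper imageI uT)
  ultimately have "Sup (\<Phi> ` T) = (SUP n. \<Phi> (u n))" by (rule antisym)
  moreover have "u n w \<le> u (Suc n) w" for n w by (simp add: uS)
  ultimately show ?thesis using that uT by blast
qed

lemma nn_integral_le_of_foundation:
  assumes bis: "is_bis M E" and fd: "foundation M G (fst E)" and h: "h \<in> borel_measurable M"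
    and x: "x \<in> fst E"
    and C: "\<And>y. y \<in> G \<Longrightarrow> \<forall>w\<in>space M. 0 \<le> y w \<and> y w \<le> \<bar>x w\<bar> \<Longrightarrow>
      (\<integral>\<^sup>+w. ennreal \<bar>h w\<bar> * ennreal (y w) \<partial>M) \<le> C"
  shows "(\<integral>\<^sup>+w. ennreal \<bar>h w\<bar> * ennreal \<bar>x w\<bar> \<partial>M) \<le> C"
proof (cases "C = \<infinity>")
  case False
  define T where "T = {y \<in> G. \<forall>w\<in>space M. 0 \<le> y w \<and> y w \<le> \<bar>x w\<bar>}"
  define \<Phi> where "\<Phi> y = (\<integral>\<^sup>+w. ennreal \<bar>h w\<bar> * ennreal (y w) \<partial>M)" for y
  have Tm: "y \<in> borel_measurable M" if "y \<in> T" for y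
    using that foundationD(1)[OF fd] bis_measurable[OF bis] unfolding T_def by blast
  have Tmax: "(\<lambda>w. max (a w) (b w)) \<in> T" if "a \<in> T" and "b \<in> T" for a b
    using that foundation_max[OF bis fd] unfolding T_def by auto
  have "\<Phi> a \<le> \<Phi> b" if "\<And>w. a w \<le> b w" for a b
    unfolding \<Phi>_def using that by (intro nn_integral_mono mult_left_mono ennreal_leI) auto
  moreover have "(\<lambda>_. 0) \<in> T" using foundationD(2)[OF fd] unfolding T_def by simp
  ultimately obtain u where uT: "\<And>n. u n \<in> T" and inc: "\<And>n w. u n w \<le> u (Suc n) w"
    and sup: "Sup (\<Phi> ` T) = (SUP n. \<Phi> (u n))"
    using Sup_max_closed_incseq[of T \<Phi>] Tmax by blast
  have "Sup (\<Phi> ` T) \<le> C" using C unfolding T_def \<Phi>_def by (intro Sup_least) blast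
  then have fin: "(SUP n. \<Phi> (u n)) \<noteq> \<infinity>"
    using sup False unfolding infinity_ennreal_def by (metis neq_top_trans)
  have "AE w in M. ennreal \<bar>h w\<bar> * ennreal \<bar>x w\<bar> \<le> ennreal \<bar>h w\<bar> * (SUP n. ennreal (u n w))"
  proof (rule foundation_AE_le[OF bis fd x h])
    fix v assume "v \<in> G" "\<forall>w\<in>space M. 0 \<le> v w \<and> v w \<le> \<bar>x w\<bar>"
    then have v: "v \<in> T" unfolding T_def by blast
    have "\<Phi> (\<lambda>w. max (u n w) (v w)) \<le> (SUP n. \<Phi> (u n))" for n
      unfolding sup[symmetric] by (intro Sup_upper imageI Tmax uT v)
    with fin show "AE w in M. ennreal \<bar>h w\<bar> * ennreal (v w) \<le> ennreal \<bar>h w\<bar> * (SUP n. ennreal (u n w))"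
      unfolding \<Phi>_def by (intro AE_le_SUP_of_maximizing[where u=u, OF h Tm[OF uT] inc Tm[OF v]])
  qed (use Tm[OF uT] in measurable)
  then have "(\<integral>\<^sup>+w. ennreal \<bar>h w\<bar> * ennreal \<bar>x w\<bar> \<partial>M) \<le>
      (\<integral>\<^sup>+w. ennreal \<bar>h w\<bar> * (SUP n. ennreal (u n w)) \<partial>M)"
    by (rule nn_integral_mono_AE)
  also have "\<dots> = (SUP n. \<Phi> (u n))"
    unfolding \<Phi>_def using h Tm[OF uT] inc by (rule nn_integral_weighted_SUP)
  finally show ?thesis using sup \<open>Sup (\<Phi> ` T) \<le> C\<close> by simp
qed simp

lemma kdual_foundation:
  assumes bis: "is_bis M E" and bisF: "is_bis M F" and fd: "foundation M (fst F) (fst E)"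
    and norm: "\<And>x. x \<in> fst F \<Longrightarrow> snd F x = snd E x"
  shows "bis_eq (kdual M E) (kdual M F)"
proof (rule sub1_antisym)
  have "sub1 F E" using foundationD(1)[OF fd] norm unfolding sub1_def by auto
  then show "sub1 (kdual M E) (kdual M F)" by (rule sub1_kdual_antimono[OF bis])
  show "sub1 (kdual M F) (kdual M E)"
    unfolding sub1_def
  proof (intro conjI ballI subsetI)
    fix f assume f: "f \<in> fst (kdual M F)"
    let ?C = "snd (kdual M F) f"
    have "f \<in> fst (kdual M E) \<and> snd (kdual M E) f \<le> ?C"
    proof (rule kdual_memI)
      fix x assume x: "x \<in> fst E"
      have "(\<integral>\<^sup>+w. ennreal \<bar>f w\<bar> * ennreal \<bar>x w\<bar> \<partial>M) \<le> ennreal (?C * snd E x)"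
      proof (rule nn_integral_le_of_foundation[OF bis fd kdual_measurable[OF f] x])
        fix y assume y: "y \<in> fst F" and bound: "\<forall>w\<in>space M. 0 \<le> y w \<and> y w \<le> \<bar>x w\<bar>"
        have "(\<integral>\<^sup>+w. ennreal \<bar>f w\<bar> * ennreal (y w) \<partial>M) = (\<integral>\<^sup>+w. ennreal \<bar>f w * y w\<bar> \<partial>M)"
          using bound by (intro nn_integral_cong) (auto simp: abs_mult ennreal_mult)
        also have "\<dots> \<le> ennreal (?C * snd F y)" by (rule nn_integral_abs_le_kdual_norm[OF bisF f y])
        also have "snd F y \<le> snd E x"
          using bound bis_solid[OF bis x] bis_measurable[OF bisF y] norm[OF y] by (auto intro!: AE_I2)
        then have "ennreal (?C * snd F y) \<le> ennreal (?C * snd E x)"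
          using kdual_norm_nonneg[OF f] by (intro ennreal_leI mult_left_mono)
        finally show "(\<integral>\<^sup>+w. ennreal \<bar>f w\<bar> * ennreal (y w) \<partial>M) \<le> ennreal (?C * snd E x)" .
      qed
      then show "(\<integral>\<^sup>+w. ennreal \<bar>f w * x w\<bar> \<partial>M) \<le> ennreal (?C * snd E x)"
        by (simp add: abs_mult ennreal_mult)
    qed (use bis_measurable[OF bis] kdual_measurable[OF f] kdual_norm_nonneg[OF f] in auto)
    then show "f \<in> fst (kdual M E)" "snd (kdual M E) f \<le> ?C" by auto
  qed
qed

section \<open>The two closure operators\<close>

lemma J0D:
  assumes "J0 M E"
  shows "is_bis M E" and "max_width M (fst E)" and "foundation M (fst (oc_part M E)) (fst E)"
    and "foundation M (fst (oc_part M (kdual M E))) (fst (kdual M E))"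
  using assms unfolding J0_def by blast+

lemma J0_kdual_max_width:
  assumes "J0 M E"
  shows "max_width M (fst (kdual M E))"
  using max_width_mono foundationD(1,5)[OF J0D(4)[OF assms]] by blast

lemma J0_oc_part:
  assumes J: "J0 M E"
  shows "J0 M (oc_part M E)"
proof -
  note bis = J0D(1)[OF J] and mw = J0D(2)[OF J] and fd = J0D(3)[OF J]
  have bis0: "is_bis M (oc_part M E)" by (rule oc_part_is_bis[OF bis])
  have mw0: "max_width M (fst (oc_part M E))" by (rule foundationD(5)[OF fd])
  have "fst (oc_part M (oc_part M E)) = fst (oc_part M E)"
    using oc_part_idem[of M E] unfolding bis_eq_def by blast
  then have fd0: "foundation M (fst (oc_part M (oc_part M E))) (fst (oc_part M E))"
    using foundation_oc_part[OF bis0] mw0 by simp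
  have "bis_eq (kdual M E) (kdual M (oc_part M E))"
    by (rule kdual_foundation[OF bis bis0 fd]) simp
  then have "foundation M (fst (oc_part M (kdual M (oc_part M E)))) (fst (kdual M (oc_part M E)))"
    using foundation_oc_part_transfer kdual_is_bis[OF bis mw] kdual_is_bis[OF bis0 mw0] J0D(4)[OF J]
    by blast
  with bis0 mw0 fd0 show ?thesis unfolding J0_def by blast
qed

lemma J0_bidual:
  assumes J: "J0 M E"
  shows "J0 M (kdual M (kdual M E))"
proof -
  note bis = J0D(1)[OF J] and mw = J0D(2)[OF J] and mw' = J0_kdual_max_width[OF J]
  have bis1: "is_bis M (kdual M E)" by (rule kdual_is_bis[OF bis mw])
  have bis2: "is_bis M (kdual M (kdual M E))" by (rule kdual_is_bis[OF bis1 mw'])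
  have sub: "sub1 E (kdual M (kdual M E))" by (rule sub1_bidual[OF bis])
  then have mw2: "max_width M (fst (kdual M (kdual M E)))"
    using max_width_mono mw unfolding sub1_def by blast
  have "fst (oc_part M E) \<subseteq> fst (oc_part M (kdual M (kdual M E)))"
    using sub1_oc_part_mono[OF bis sub] unfolding sub1_def by blast
  then have fd2: "foundation M (fst (oc_part M (kdual M (kdual M E)))) (fst (kdual M (kdual M E)))"
    using foundation_oc_part[OF bis2] max_width_mono foundationD(5)[OF J0D(3)[OF J]] by blast
  have "bis_eq (kdual M E) (kdual M (kdual M (kdual M E)))" by (rule bis_eq_kdual_triple[OF bis mw mw'])
  then have "foundation M (fst (oc_part M (kdual M (kdual M (kdual M E)))))
      (fst (kdual M (kdual M (kdual M E))))"
    using foundation_oc_part_transfer[OF bis1 kdual_is_bis[OF bis2 mw2]] J0D(4)[OF J] by blast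
  with bis2 mw2 fd2 show ?thesis unfolding J0_def by blast
qed

theorem theorem8:
  fixes M :: "'a measure"
  assumes "admissible M"
  shows
   "((\<forall>E. J0 M E \<longrightarrow> J0 M (oc_part M E)) \<and>
     (\<forall>E F. J0 M E \<longrightarrow> J0 M F \<longrightarrow> sub1 F E \<longrightarrow> sub1 (oc_part M F) (oc_part M E)) \<and>
     (\<forall>E. J0 M E \<longrightarrow> sub1 (oc_part M E) E) \<and>
     (\<forall>E. J0 M E \<longrightarrow> bis_eq (oc_part M (oc_part M E)) (oc_part M E)))
    \<and>
    ((\<forall>E. J0 M E \<longrightarrow> J0 M (kdual M (kdual M E))) \<and>
     (\<forall>E F. J0 M E \<longrightarrow> J0 M F \<longrightarrow> sub1 E F \<longrightarrow> sub1 (kdual M (kdual M E)) (kdual M (kdual M F))) \<and>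
     (\<forall>E. J0 M E \<longrightarrow> sub1 E (kdual M (kdual M E))) \<and>
     (\<forall>E. J0 M E \<longrightarrow> bis_eq (kdual M (kdual M (kdual M (kdual M E)))) (kdual M (kdual M E))))"
proof (intro conjI allI impI)
  fix E assume J: "J0 M E"
  show "J0 M (oc_part M E)" by (rule J0_oc_part[OF J])
  show "sub1 (oc_part M E) E" by (rule sub1_oc_part)
  show "bis_eq (oc_part M (oc_part M E)) (oc_part M E)" by (rule oc_part_idem)
  show "J0 M (kdual M (kdual M E))" by (rule J0_bidual[OF J])
  show "sub1 E (kdual M (kdual M E))" by (rule sub1_bidual[OF J0D(1)[OF J]])
  have "bis_eq (kdual M (kdual M (kdual M E))) (kdual M E)"
    using bis_eq_kdual_triple[OF J0D(1,2)[OF J] J0_kdual_max_width[OF J]] by (rule bis_eq_sym)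
  then have "kdual M (kdual M (kdual M (kdual M E))) = kdual M (kdual M E)" by (rule kdual_cong)
  then show "bis_eq (kdual M (kdual M (kdual M (kdual M E)))) (kdual M (kdual M E))"
    by (simp add: bis_eq_def)
next
  fix E F assume JE: "J0 M E" and JF: "J0 M F"
  show "sub1 F E \<Longrightarrow> sub1 (oc_part M F) (oc_part M E)" by (rule sub1_oc_part_mono[OF J0D(1)[OF JF]])
  show "sub1 E F \<Longrightarrow> sub1 (kdual M (kdual M E)) (kdual M (kdual M F))"
    by (rule sub1_bidual_mono[OF J0D(1,2)[OF JE] J0D(1)[OF JF]])
qed

end
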